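(* Consider the Double TFM with all transactions of common size $s>0$, history $H$ with burning fee $r$, and a set $M_0$ of user transactions with $|M_0|=w>c_{block}$ (congestion). Suppose all includers and the block producer follow the indicated allocation rules and add no fake transactions, and let $B_k$ be the resulting block. Then for every transaction $t\in M_0\setminus B_k$ there exists a bid $b_t$ for $t$ such that, when $b_t$ replaces the original bid of $t$ and all other transactions and bids are unchanged, and all includers and the block producer follow the indicated allocation rules without fake transactions, $t$ is included in at least one inclusion list and in the block.
   Context: Model: in one slot there are users, $m$ includers with distinct orders $1,\dots,m$ (order $1$ is best), and one block producer. Each transaction has size $s$. An includer chooses an inclusion list (at most $c_{Incl}$ transactions) and the block producer, seeing the lists, builds a block (at most $c_{block}$ transactions). Every transaction in the block pays burning fee $r s$. The block producer incurs cost $\mu^{Cost}_{BP}\ge0$ per unit of size per user transaction in its block; each includer incurs cost $\mu^{Cost}_{CM}\ge0$ per unit of size per user transaction in its list. Double TFM: a bid is $b_t=(\delta^{CM}_t,\delta^{BP}_t,c_t)$ with all entries nonnegative reals. The block producer fee of $t$ is $\max\{\min\{\delta^{BP}_t s,\ c_t s-rs\},0\}$ (paid to the block producer when $t$ is in the block); the committee fee is $\max\{\min\{\delta^{CM}_t s,\ c_t s-rs-\min\{\delta^{BP}_t s, c_t s-rs\}\},0\}$ (paid to the smallest-order includer that listed $t$, only if $t$ is in the block). Indicated allocation rules. Block producer: among transactions with $c_t\ge r+\mu^{Cost}_{BP}$ and $\delta^{BP}_t\ge \mu^{Cost}_{BP}$, include those with the highest block producer fee (deterministic tie-breaking) until the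 block is full or none remain. Includer of order $j$: compute the set $S$ of transactions the block producer following its rule would include; discard from $S$ those with committee fee below $\mu^{Cost}_{CM} s$; sort the rest by committee fee decreasingly (deterministic tie-breaking); includer $j$ includes the transactions in positions $(j-1)c_{Incl}+1,\dots,jc_{Incl}$ of this sorted list (if present). *)

theory Defs
  imports Main "HOL.Real"
begin

text \<open>A bid is a triple (delta_CM, delta_BP, c) of reals.\<close>
type_synonym bid = "real \<times> real \<times> real"

definition valid_bid :: "bid \<Rightarrow> bool" where
  "valid_bid b = (case b of (dcm, dbp, c) \<Rightarrow> 0 \<le> dcm \<and> 0 \<le> dbp \<and> 0 \<le> c)"

definition bp_fee :: "real \<Rightarrow> real \<Rightarrow> bid \<Rightarrow> real" where
  "bp_fee r s b = (case b of (dcm, dbp, c) \<Rightarrow> max (min (dbp * s) (c * s - r * s)) 0)"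

definition cm_fee :: "real \<Rightarrow> real \<Rightarrow> bid \<Rightarrow> real" where
  "cm_fee r s b = (case b of (dcm, dbp, c) \<Rightarrow>
      max (min (dcm * s) (c * s - r * s - min (dbp * s) (c * s - r * s))) 0)"

text \<open>Position (0-based) of x in A when A is sorted decreasingly by key f,
  ties broken deterministically by the injective rank tb (smaller tb first).\<close>
definition sort_pos :: "('a \<Rightarrow> real) \<Rightarrow> ('a \<Rightarrow> nat) \<Rightarrow> 'a set \<Rightarrow> 'a \<Rightarrow> nat" where
  "sort_pos f tb A x = card {y \<in> A. f x < f y \<or> (f y = f x \<and> tb y < tb x)}"

definition bp_block ::
  "real \<Rightarrow> real \<Rightarrow> real \<Rightarrow> nat \<Rightarrow> ('a \<Rightarrow> nat) \<Rightarrow> 'a set \<Rightarrow> ('a \<Rightarrow> bid) \<Rightarrow> 'a set" where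
  "bp_block r s muBP cblock tbBP M bids =
    (let Cand = {t \<in> M. r + muBP \<le> snd (snd (bids t)) \<and> muBP \<le> fst (snd (bids t))}
     in {t \<in> Cand. sort_pos (\<lambda>u. bp_fee r s (bids u)) tbBP Cand t < cblock})"

text \<open>Indicated allocation rule of the includer of order j (j \<ge> 1): positions
  (j-1) cIncl + 1, ..., j cIncl (1-based) of the sorted list.\<close>
definition incl_list ::
  "real \<Rightarrow> real \<Rightarrow> real \<Rightarrow> real \<Rightarrow> nat \<Rightarrow> nat \<Rightarrow> ('a \<Rightarrow> nat) \<Rightarrow> ('a \<Rightarrow> nat)
     \<Rightarrow> 'a set \<Rightarrow> ('a \<Rightarrow> bid) \<Rightarrow> nat \<Rightarrow> 'a set" where
  "incl_list r s muBP muCM cblock cIncl tbBP tbCM M bids j =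
    (let S = {t \<in> bp_block r s muBP cblock tbBP M bids. muCM * s \<le> cm_fee r s (bids t)}
     in {t \<in> S. (j - 1) * cIncl \<le> sort_pos (\<lambda>u. cm_fee r s (bids u)) tbCM S t
               \<and> sort_pos (\<lambda>u. cm_fee r s (bids u)) tbCM S t < j * cIncl})"

end

theory Submission
  imports Defs
begin

text \<open>A transaction left out of the block can always outbid everyone: offering block producer
  and committee tips that both exceed every fee currently on the table, with a total bid covering
  burn plus both tips, makes it the unique maximum of both fee orders. It then sits at position 0
  of the block producer's ranking and of the committee ranking, so it is in the block and in the
  list of the includer of order 1. Since the maximum is strict, neither the tie-breaking ranks nor
  congestion play any role.\<close>

lemma sort_pos_eq_0_if_strict_max:
  assumes "\<And>y. y \<in> A \<Longrightarrow> y \<noteq> x \<Longrightarrow> f y < f x"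
  shows "sort_pos f tb A x = 0"
proof -
  have "{y \<in> A. f x < f y \<or> (f y = f x \<and> tb y < tb x)} = {}"
    using assms by fastforce
  then show ?thesis
    unfolding sort_pos_def by (simp only: card.empty)
qed

lemma bp_fee_covered:
  assumes "0 \<le> dbp" "0 \<le> s" "dbp \<le> c - r"
  shows "bp_fee r s (dcm, dbp, c) = dbp * s"
proof -
  have "dbp * s \<le> c * s - r * s"
    using assms mult_right_mono[of dbp "c - r" s] by (simp add: left_diff_distrib)
  then show ?thesis
    using assms by (simp add: bp_fee_def)
qed

lemma cm_fee_covered:
  assumes "0 \<le> dcm" "0 \<le> dbp" "0 \<le> s" "dbp + dcm \<le> c - r"
  shows "cm_fee r s (dcm, dbp, c) = dcm * s"
proof -
  have "dbp * s + dcm * s \<le> c * s - r * s"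
    using assms mult_right_mono[of "dbp + dcm" "c - r" s] by (simp add: algebra_simps)
  moreover have "0 \<le> dbp * s" "0 \<le> dcm * s"
    using assms by simp_all
  ultimately show ?thesis
    by (simp add: cm_fee_def)
qed

lemma mem_bp_block_if_strict_max_bp_fee:
  assumes "t \<in> M" "r + muBP \<le> snd (snd (bids t))" "muBP \<le> fst (snd (bids t))" "1 \<le> cblock"
    and "\<And>y. y \<in> M \<Longrightarrow> y \<noteq> t \<Longrightarrow> bp_fee r s (bids y) < bp_fee r s (bids t)"
  shows "t \<in> bp_block r s muBP cblock tbBP M bids"
proof -
  define Cand where
    "Cand = {u \<in> M. r + muBP \<le> snd (snd (bids u)) \<and> muBP \<le> fst (snd (bids u))}"
  have "sort_pos (\<lambda>u. bp_fee r s (bids u)) tbBP Cand t = 0"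
    by (rule sort_pos_eq_0_if_strict_max) (simp add: Cand_def assms(5))
  then show ?thesis
    using assms(1-4) unfolding bp_block_def Let_def Cand_def[symmetric] by (simp add: Cand_def)
qed

lemma mem_incl_list_1_if_strict_max_cm_fee:
  assumes "t \<in> bp_block r s muBP cblock tbBP M bids" "muCM * s \<le> cm_fee r s (bids t)"
    "1 \<le> cIncl"
    and "\<And>y. y \<in> M \<Longrightarrow> y \<noteq> t \<Longrightarrow> cm_fee r s (bids y) < cm_fee r s (bids t)"
  shows "t \<in> incl_list r s muBP muCM cblock cIncl tbBP tbCM M bids 1"
proof -
  define S where
    "S = {u \<in> bp_block r s muBP cblock tbBP M bids. muCM * s \<le> cm_fee r s (bids u)}"
  have "sort_pos (\<lambda>u. cm_fee r s (bids u)) tbCM S t = 0"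
    by (rule sort_pos_eq_0_if_strict_max) (auto simp: S_def bp_block_def assms(4))
  then show ?thesis
    using assms(1-3) unfolding incl_list_def Let_def S_def[symmetric] by (simp add: S_def)
qed

theorem mainTheorem2:
  fixes M0 :: "'a set" and bids :: "'a \<Rightarrow> bid"
    and r s muBP muCM :: real and m cblock cIncl :: nat
    and tbBP tbCM :: "'a \<Rightarrow> nat"
  assumes "finite M0"
    and "s > 0"
    and "muBP \<ge> 0" and "muCM \<ge> 0"
    and "m \<ge> 1" and "cblock \<ge> 1" and "cIncl \<ge> 1"
    and "inj_on tbBP M0" and "inj_on tbCM M0"
    and "\<forall>t\<in>M0. valid_bid (bids t)"
    and "card M0 > cblock"
    and "t \<in> M0 - bp_block r s muBP cblock tbBP M0 bids"
  shows "\<exists>b. valid_bid b \<and>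
           (\<exists>j\<in>{1..m}. t \<in> incl_list r s muBP muCM cblock cIncl tbBP tbCM M0 (bids(t := b)) j) \<and>
           t \<in> bp_block r s muBP cblock tbBP M0 (bids(t := b))"
proof -
  obtain K where K: "\<And>y. y \<in> M0 \<Longrightarrow> max (bp_fee r s (bids y)) (cm_fee r s (bids y)) \<le> K"
    using bdd_above_finite[of "(\<lambda>y. max (bp_fee r s (bids y)) (cm_fee r s (bids y))) ` M0"]
      assms(1) unfolding bdd_above_def by auto
  define X where "X = (\<bar>K\<bar> + 1) / s + \<bar>r\<bar> + muBP + muCM"
  have "0 < (\<bar>K\<bar> + 1) / s"
    using assms(2) by simp
  then have X: "0 \<le> X" "muBP \<le> X" "muCM \<le> X" "- r \<le> X"
    using assms(3,4) by (auto simp: X_def)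
  have "X * s = \<bar>K\<bar> + 1 + (\<bar>r\<bar> + muBP + muCM) * s"
    using assms(2) by (simp add: X_def field_simps)
  also have "\<dots> > K"
    using assms(2-4) by (smt (verit) zero_le_mult_iff)
  finally have K_lt: "K < X * s" .
  define b :: bid where "b = (X, X, r + 2 * X)"
  define bids' where "bids' = bids(t := b)"
  have fees_b: "bp_fee r s b = X * s" "cm_fee r s b = X * s"
    using X assms(2) by (simp_all add: b_def bp_fee_covered cm_fee_covered)
  have tB: "t \<in> bp_block r s muBP cblock tbBP M0 bids'"
    by (rule mem_bp_block_if_strict_max_bp_fee)
      (use assms(6,12) X K_lt fees_b K in \<open>auto simp: bids'_def b_def intro: le_less_trans\<close>)
  have "t \<in> incl_list r s muBP muCM cblock cIncl tbBP tbCM M0 bids' 1"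
    by (rule mem_incl_list_1_if_strict_max_cm_fee)
      (use tB assms(2,7) X K_lt fees_b K in \<open>auto simp: bids'_def intro: le_less_trans\<close>)
  moreover have "valid_bid b"
    using X by (simp add: valid_bid_def b_def)
  ultimately show ?thesis
    using tB assms(5) unfolding bids'_def by (meson atLeastAtMost_iff order_refl)
qed

end
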